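(* There exists a discrete probability distribution $F$ on $(0,1]$ with $F$-almost surely every sample $X$ satisfying $X\ge 1/4$, such that, with $I_n(F)=(X_1,\ldots,X_n)$ a list of $n$ i.i.d. samples from $F$, $$\liminf_{n\to\infty}\frac{\mathbb{E}[\mathrm{BF}(I_n(F))]}{\mathbb{E}[\mathrm{OPT}(I_n(F))]} > \frac{11}{10}.$$
   Context: Bin packing: items with sizes in $(0,1]$ are packed into unit-capacity bins (total size per bin at most $1$); $\mathrm{OPT}(I)$ is the minimum number of bins for list $I$. The online algorithm Best Fit (BF) processes the items in the given order and packs the current item into the fullest bin (largest current load) into which it fits, opening a new bin if it fits into no existing bin; items are never moved. $\mathrm{BF}(I)$ denotes the number of bins Best Fit uses on list $I$. *)

theory Defs
  imports "HOL-Probability.Probability"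
begin

text \<open>The state is the list of bin loads, in the
order in which the bins were opened.\<close>

definition bf_step :: "real list \<Rightarrow> real \<Rightarrow> real list" where
  "bf_step loads x =
     (let cands = filter (\<lambda>i. loads ! i + x \<le> 1) [0..<length loads] in
      if cands = [] then loads @ [x]
      else (let m = Max ((\<lambda>i. loads ! i) ` set cands);
                j = hd (filter (\<lambda>i. loads ! i = m) cands)
            in loads[j := loads ! j + x]))"

definition bf_loads :: "real list \<Rightarrow> real list" where
  "bf_loads I = fold (\<lambda>x loads. bf_step loads x) I []"

definition BF :: "real list \<Rightarrow> nat" where
  "BF I = length (bf_loads I)"

definition OPT :: "real list \<Rightarrow> nat" where
  "OPT I = (LEAST k. \<exists>f :: nat \<Rightarrow> nat.
              (\<forall>i<length I. f i < k) \<and>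
              (\<forall>b<k. (\<Sum>i\<in>{i. i < length I \<and> f i = b}. I ! i) \<le> 1))"

end

theory Submission
  imports Defs
begin

text \<open>Let items be 1/4 with probability 3/5 and 3/10 with probability 2/5. As every item is
at least 1/4, a Best Fit bin of load above 3/4 never receives another item, and the multiset of
the remaining (open) bin loads only visits nine configurations. On these configurations the
Poisson equation of the resulting Markov chain has a solution, a nonpositive potential, for which
the number of bins plus the potential of the open configuration grows by exactly 1775/5676 per
item in expectation; hence E[BF] is at least 1775/5676 n. Packing the items of size 1/4 four to a
bin and the others three to a bin gives E[OPT] at most 17/60 n + 2, and
(1775/5676) / (17/60) > 1.1037.\<close>

lemma finite_set_pmf_replicate_pmf:
  assumes "finite (set_pmf F)"
  shows "finite (set_pmf (replicate_pmf n F))"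
proof -
  have "set_pmf (replicate_pmf n F) = {xs. set xs \<subseteq> set_pmf F \<and> length xs = n}"
    by (auto simp: set_replicate_pmf)
  then show ?thesis
    using finite_lists_length_eq[OF assms] by simp
qed

lemma expectation_replicate_pmf_Suc:
  fixes h :: "'a list \<Rightarrow> real"
  assumes "finite (set_pmf F)"
  shows "measure_pmf.expectation (replicate_pmf (Suc n) F) h =
         measure_pmf.expectation F (\<lambda>x. measure_pmf.expectation (replicate_pmf n F) (\<lambda>xs. h (x # xs)))"
proof -
  have "replicate_pmf (Suc n) F = F \<bind> (\<lambda>x. map_pmf (Cons x) (replicate_pmf n F))"
    by (simp add: map_pmf_def)
  then have "measure_pmf.expectation (replicate_pmf (Suc n) F) h =
      (\<Sum>x\<in>set_pmf F. pmf F x *\<^sub>R measure_pmf.expectation (map_pmf (Cons x) (replicate_pmf n F)) h)"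
    using assms by (simp add: pmf_expectation_bind finite_set_pmf_replicate_pmf)
  also have "\<dots> = measure_pmf.expectation F
                   (\<lambda>x. measure_pmf.expectation (map_pmf (Cons x) (replicate_pmf n F)) h)"
    using assms by (simp add: integral_measure_pmf)
  finally show ?thesis
    by simp
qed

lemma expectation_fold_drift:
  fixes step :: "'s \<Rightarrow> 'a \<Rightarrow> 's" and \<Phi> :: "'s \<Rightarrow> real"
  assumes fin: "finite (set_pmf F)"
    and closed: "\<And>s x. s \<in> S \<Longrightarrow> x \<in> set_pmf F \<Longrightarrow> step s x \<in> S"
    and drift: "\<And>s. s \<in> S \<Longrightarrow> measure_pmf.expectation F (\<lambda>x. \<Phi> (step s x)) = \<Phi> s + c"
    and "s \<in> S"
  shows "measure_pmf.expectation (replicate_pmf n F) (\<lambda>I. \<Phi> (fold (\<lambda>x s. step s x) I s)) = \<Phi> s + c * n"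
  using \<open>s \<in> S\<close>
proof (induction n arbitrary: s)
  case 0
  then show ?case by simp
next
  case (Suc n)
  have "measure_pmf.expectation (replicate_pmf (Suc n) F) (\<lambda>I. \<Phi> (fold (\<lambda>x s. step s x) I s)) =
        measure_pmf.expectation F (\<lambda>x. measure_pmf.expectation (replicate_pmf n F)
          (\<lambda>I. \<Phi> (fold (\<lambda>x s. step s x) I (step s x))))"
    by (subst expectation_replicate_pmf_Suc[OF fin]) simp
  also have "\<dots> = measure_pmf.expectation F (\<lambda>x. \<Phi> (step s x) + c * n)"
    using Suc closed by (intro integral_cong_AE) (auto simp: AE_measure_pmf_iff)
  also have "\<dots> = \<Phi> s + c * Suc n"
    using Suc fin by (simp add: drift integrable_measure_pmf_finite measure_pmf.prob_space algebra_simps)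
  finally show ?case .
qed

lemma expectation_sum_list_replicate_pmf:
  fixes w :: "'a \<Rightarrow> real"
  assumes "finite (set_pmf F)"
  shows "measure_pmf.expectation (replicate_pmf n F) (\<lambda>I. \<Sum>x\<leftarrow>I. w x) = measure_pmf.expectation F w * n"
proof -
  have "fold (\<lambda>x s. s + w x) I s = s + (\<Sum>x\<leftarrow>I. w x)" for I s
    by (induction I arbitrary: s) (simp_all add: algebra_simps)
  moreover have "measure_pmf.expectation F (\<lambda>x. s + w x) = s + measure_pmf.expectation F w" for s
    using assms by (simp add: integrable_measure_pmf_finite measure_pmf.prob_space)
  ultimately show ?thesis
    using expectation_fold_drift[OF assms, of UNIV "\<lambda>s x. s + w x" id _ 0 n] by simp
qed

definition is_packing :: "real list \<Rightarrow> nat \<Rightarrow> (nat \<Rightarrow> nat) \<Rightarrow> bool" where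
  "is_packing I k f \<longleftrightarrow> (\<forall>i<length I. f i < k) \<and>
     (\<forall>b<k. (\<Sum>i\<in>{i. i < length I \<and> f i = b}. I ! i) \<le> 1)"

lemma OPT_le_packing: "is_packing I k f \<Longrightarrow> OPT I \<le> k"
  unfolding OPT_def is_packing_def by (rule Least_le) blast

lemma is_packing_OPT: "is_packing I k f \<Longrightarrow> \<exists>g. is_packing I (OPT I) g"
  unfolding OPT_def is_packing_def by (rule LeastI_ex) blast

lemma OPT_pos:
  assumes "is_packing I k f" and "I \<noteq> []"
  shows "OPT I > 0"
proof -
  obtain g where "is_packing I (OPT I) g"
    using is_packing_OPT[OF assms(1)] by blast
  then have "g 0 < OPT I"
    using assms(2) by (simp add: is_packing_def)
  then show ?thesis
    by simp
qed

lemma is_packing_small_items: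
  assumes "p > 0" and small: "\<And>x. x \<in> set I \<Longrightarrow> real p * x \<le> 1"
  shows "is_packing I ((length I + p - 1) div p) (\<lambda>i. i div p)"
  unfolding is_packing_def
proof (intro conjI allI impI)
  fix i assume "i < length I"
  then have "(i + p) div p \<le> (length I + p - 1) div p"
    by (intro div_le_mono) simp
  then show "i div p < (length I + p - 1) div p"
    using \<open>p > 0\<close> by simp
next
  fix b
  let ?B = "{i. i < length I \<and> i div p = b}"
  have "?B \<subseteq> (\<lambda>r. b * p + r) ` {..<p}"
  proof
    fix i assume "i \<in> ?B"
    then have "i = b * p + i mod p" and "i mod p < p"
      using \<open>p > 0\<close> div_mult_mod_eq[of i p] by auto
    then show "i \<in> (\<lambda>r. b * p + r) ` {..<p}" by blast
  qed
  then have "card ?B \<le> card ((\<lambda>r. b * p + r) ` {..<p})"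
    by (intro card_mono) auto
  also have "\<dots> \<le> p"
    using card_image_le[of "{..<p}" "\<lambda>r. b * p + r"] by simp
  finally have "card ?B \<le> p" .
  have "(\<Sum>i\<in>?B. I ! i) \<le> real (card ?B) * (1 / p)"
    using \<open>p > 0\<close> by (intro sum_bounded_above) (auto simp: le_divide_eq mult.commute intro: small)
  also have "\<dots> \<le> 1"
    using \<open>card ?B \<le> p\<close> \<open>p > 0\<close> by (simp add: divide_le_eq)
  finally show "(\<Sum>i\<in>?B. I ! i) \<le> 1" .
qed

definition filter_index :: "('a \<Rightarrow> bool) \<Rightarrow> 'a list \<Rightarrow> nat \<Rightarrow> nat" where
  "filter_index P xs i = length (filter P (take i xs))"

lemma nth_filter_filter_index:
  assumes "i < length xs" and "P (xs ! i)"
  shows "filter P xs ! filter_index P xs i = xs ! i"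
proof -
  have "filter P xs = filter P (take i xs) @ xs ! i # filter P (drop (Suc i) xs)"
    using assms by (metis filter.simps(2) filter_append id_take_nth_drop)
  then show ?thesis
    by (simp add: filter_index_def nth_append)
qed

lemma filter_index_less:
  assumes "i < j" and "j \<le> length xs" and "P (xs ! i)"
  shows "filter_index P xs i < filter_index P xs j"
proof -
  have "take j xs = take i xs @ take (j - i) (drop i xs)"
    using take_add[of i "j - i" xs] assms by simp
  also have "take (j - i) (drop i xs) = xs ! i # take (j - Suc i) (drop (Suc i) xs)"
    using assms by (simp add: Cons_nth_drop_Suc[symmetric] Suc_diff_Suc[symmetric])
  finally show ?thesis
    using assms by (simp add: filter_index_def)
qed

lemma filter_index_less_length: "i < length xs \<Longrightarrow> P (xs ! i) \<Longrightarrow> filter_index P xs i < length (filter P xs)"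
  using filter_index_less[of i "length xs" xs P] by (simp add: filter_index_def)

lemma bij_betw_filter_index:
  "bij_betw (filter_index P xs) {i. i < length xs \<and> P (xs ! i)} {..<length (filter P xs)}"
proof -
  let ?A = "{i. i < length xs \<and> P (xs ! i)}"
  have inj: "inj_on (filter_index P xs) ?A"
  proof (rule inj_onI)
    fix i j assume "i \<in> ?A" "j \<in> ?A" "filter_index P xs i = filter_index P xs j"
    then show "i = j"
      using filter_index_less[of i j xs P] filter_index_less[of j i xs P]
      by (cases i j rule: linorder_cases) auto
  qed
  moreover have "filter_index P xs ` ?A \<subseteq> {..<length (filter P xs)}"
    using filter_index_less_length by blast
  moreover have "card (filter_index P xs ` ?A) = card {..<length (filter P xs)}"
    using card_image[OF inj] by (simp add: length_filter_conv_card)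
  ultimately show ?thesis
    by (simp add: bij_betw_def card_subset_eq)
qed

lemma sum_filter_index:
  fixes xs :: "'a::comm_monoid_add list"
  shows "(\<Sum>i\<in>{i. i < length xs \<and> P (xs ! i) \<and> Q (filter_index P xs i)}. xs ! i) =
         (\<Sum>j\<in>{j. j < length (filter P xs) \<and> Q j}. filter P xs ! j)"
proof -
  let ?S = "{i. i < length xs \<and> P (xs ! i) \<and> Q (filter_index P xs i)}"
  let ?A = "{i. i < length xs \<and> P (xs ! i)}"
  have bij: "bij_betw (filter_index P xs) ?A {..<length (filter P xs)}"
    by (rule bij_betw_filter_index)
  have "?S = {i \<in> ?A. Q (filter_index P xs i)}"
    by auto
  then have "filter_index P xs ` ?S = {j \<in> filter_index P xs ` ?A. Q j}"
    by blast
  also have "\<dots> = {j. j < length (filter P xs) \<and> Q j}"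
    using bij by (auto simp: bij_betw_def)
  finally have img: "filter_index P xs ` ?S = {j. j < length (filter P xs) \<and> Q j}" .
  have "bij_betw (filter_index P xs) ?S {j. j < length (filter P xs) \<and> Q j}"
    by (rule bij_betw_subset[OF bij _ img]) auto
  then have "(\<Sum>i\<in>?S. filter P xs ! filter_index P xs i) = (\<Sum>j\<in>{j. j < length (filter P xs) \<and> Q j}. filter P xs ! j)"
    by (rule sum.reindex_bij_betw)
  then show ?thesis
    by (simp add: nth_filter_filter_index)
qed

lemma is_packing_filter_merge:
  assumes g: "is_packing (filter P I) k g" and h: "is_packing (filter (\<lambda>x. \<not> P x) I) l h"
  shows "is_packing I (k + l)
           (\<lambda>i. if P (I ! i) then g (filter_index P I i) else k + h (filter_index (\<lambda>x. \<not> P x) I i))"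
    (is "is_packing I _ ?f")
proof -
  have g_less: "g (filter_index P I i) < k" if "i < length I" "P (I ! i)" for i
    using g filter_index_less_length[of i I P, OF that] by (simp add: is_packing_def)
  have h_less: "h (filter_index (\<lambda>x. \<not> P x) I i) < l" if "i < length I" "\<not> P (I ! i)" for i
    using h filter_index_less_length[of i I "\<lambda>x. \<not> P x"] that by (simp add: is_packing_def)
  have "(\<Sum>i\<in>{i. i < length I \<and> ?f i = b}. I ! i) \<le> 1" if "b < k + l" for b
  proof (cases "b < k")
    case True
    then have "(\<Sum>i\<in>{i. i < length I \<and> ?f i = b}. I ! i) =
               (\<Sum>i\<in>{i. i < length I \<and> P (I ! i) \<and> g (filter_index P I i) = b}. I ! i)"
      by (intro sum.cong) auto
    also have "\<dots> = (\<Sum>j\<in>{j. j < length (filter P I) \<and> g j = b}. filter P I ! j)"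
      by (rule sum_filter_index)
    also have "\<dots> \<le> 1"
      using g True by (simp add: is_packing_def)
    finally show ?thesis .
  next
    case False
    then have "(\<Sum>i\<in>{i. i < length I \<and> ?f i = b}. I ! i) =
               (\<Sum>i\<in>{i. i < length I \<and> \<not> P (I ! i) \<and> h (filter_index (\<lambda>x. \<not> P x) I i) = b - k}. I ! i)"
      using g_less by (intro sum.cong) auto
    also have "\<dots> = (\<Sum>j\<in>{j. j < length (filter (\<lambda>x. \<not> P x) I) \<and> h j = b - k}. filter (\<lambda>x. \<not> P x) I ! j)"
      by (rule sum_filter_index)
    also have "\<dots> \<le> 1"
      using h False that by (simp add: is_packing_def)
    finally show ?thesis .
  qed
  then show ?thesis
    using g_less h_less by (auto simp: is_packing_def intro: trans_less_add1)
qed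

lemma OPT_le_two_sizes:
  assumes "set I \<subseteq> {1/4, 3/10}"
  shows "real (OPT I) \<le> (\<Sum>x\<leftarrow>I. if x = 1/4 then 1/4 else 1/3) + 2"
proof -
  let ?A = "filter (\<lambda>x. x = 1/4) I" and ?B = "filter (\<lambda>x. x \<noteq> 1/4) I"
  have "is_packing ?A ((length ?A + 4 - 1) div 4) (\<lambda>i. i div 4)"
    by (rule is_packing_small_items) auto
  moreover have "is_packing ?B ((length ?B + 3 - 1) div 3) (\<lambda>i. i div 3)"
    by (rule is_packing_small_items) (use assms in auto)
  ultimately have "OPT I \<le> (length ?A + 4 - 1) div 4 + (length ?B + 3 - 1) div 3"
    by (rule OPT_le_packing[OF is_packing_filter_merge])
  then have "OPT I \<le> (length ?A + 3) div 4 + (length ?B + 2) div 3"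
    by simp
  then have "real (OPT I) \<le> real ((length ?A + 3) div 4) + real ((length ?B + 2) div 3)"
    by linarith
  also have "\<dots> \<le> real (length ?A + 3) / 4 + real (length ?B + 2) / 3"
    using of_nat_div_le_of_nat[where 'a = real, of "length ?A + 3" 4]
      of_nat_div_le_of_nat[where 'a = real, of "length ?B + 2" 3]
    unfolding of_nat_numeral by (rule add_mono)
  also have "\<dots> \<le> real (length ?A) / 4 + real (length ?B) / 3 + 2"
    by (simp add: field_simps)
  also have "real (length ?A) / 4 + real (length ?B) / 3 = (\<Sum>x\<leftarrow>I. if x = 1/4 then 1/4 else 1/3)"
    by (induction I) (simp_all add: field_simps)
  finally show ?thesis .
qed

definition fitting_loads :: "real multiset \<Rightarrow> real \<Rightarrow> real set" where
  "fitting_loads M x = {l \<in> set_mset M. l + x \<le> 1}"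

definition bf_insert :: "real multiset \<Rightarrow> real \<Rightarrow> real multiset" where
  "bf_insert M x =
     (if fitting_loads M x = {} then add_mset x M
      else add_mset (Max (fitting_loads M x) + x) (M - {#Max (fitting_loads M x)#}))"

lemma finite_fitting_loads [simp]: "finite (fitting_loads M x)"
  by (simp add: fitting_loads_def)

lemma Max_fitting_loads_in:
  "fitting_loads M x \<noteq> {} \<Longrightarrow> Max (fitting_loads M x) \<in># M"
  using Max_in[of "fitting_loads M x"] by (auto simp: fitting_loads_def)

lemma mset_bf_step: "mset (bf_step loads x) = bf_insert (mset loads) x"
proof -
  define cands where "cands = filter (\<lambda>i. loads ! i + x \<le> 1) [0..<length loads]"
  have img: "(\<lambda>i. loads ! i) ` set cands = fitting_loads (mset loads) x"
    by (auto simp: cands_def fitting_loads_def in_set_conv_nth)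
  show ?thesis
  proof (cases "cands = []")
    case True
    then show ?thesis
      using img by (simp add: bf_step_def bf_insert_def cands_def[symmetric])
  next
    case False
    define m where "m = Max ((\<lambda>i. loads ! i) ` set cands)"
    define j where "j = hd (filter (\<lambda>i. loads ! i = m) cands)"
    have "m \<in> (\<lambda>i. loads ! i) ` set cands"
      unfolding m_def using False by (intro Max_in) auto
    then have "filter (\<lambda>i. loads ! i = m) cands \<noteq> []"
      by (auto simp: filter_empty_conv)
    then have "j \<in> set (filter (\<lambda>i. loads ! i = m) cands)"
      unfolding j_def by (rule hd_in_set)
    then have j: "j < length loads" "loads ! j = m"
      by (auto simp: cands_def)
    have "bf_step loads x = loads[j := loads ! j + x]"
      using False by (simp add: bf_step_def cands_def[symmetric] Let_def m_def[symmetric] j_def[symmetric])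
    then have "mset (bf_step loads x) = add_mset (m + x) (mset loads - {#m#})"
      using j by (simp add: mset_update)
    moreover have "fitting_loads (mset loads) x \<noteq> {}"
      using False img by auto
    ultimately show ?thesis
      using img by (simp add: bf_insert_def m_def)
  qed
qed

lemma BF_eq_size_fold: "BF I = size (fold (\<lambda>x M. bf_insert M x) I {#})"
proof -
  have "mset (fold (\<lambda>x loads. bf_step loads x) I loads) = fold (\<lambda>x M. bf_insert M x) I (mset loads)"
    for loads
    by (induction I arbitrary: loads) (simp_all add: mset_bf_step)
  from this[of "[]"] show ?thesis
    by (metis BF_def bf_loads_def mset.simps(1) size_mset)
qed

lemma size_bf_insert: "size (bf_insert M x) = size M + of_bool (fitting_loads M x = {})"
proof (cases "fitting_loads M x = {}")
  case False
  then have "Max (fitting_loads M x) \<in># M"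
    by (rule Max_fitting_loads_in)
  moreover from this have "size M > 0"
    by (cases M) auto
  ultimately show ?thesis
    using False by (simp add: bf_insert_def size_Diff_singleton)
qed (simp add: bf_insert_def)

definition open_loads :: "real \<Rightarrow> real multiset \<Rightarrow> real multiset" where
  "open_loads a M = filter_mset (\<lambda>l. l + a \<le> 1) M"

lemma fitting_loads_open_loads: "a \<le> x \<Longrightarrow> fitting_loads (open_loads a M) x = fitting_loads M x"
  by (auto simp: fitting_loads_def open_loads_def)

lemma open_loads_bf_insert:
  assumes "a \<le> x"
  shows "open_loads a (bf_insert M x) = open_loads a (bf_insert (open_loads a M) x)"
proof (cases "fitting_loads M x = {}")
  case True
  then show ?thesis
    using fitting_loads_open_loads[OF assms, of M]
    by (simp add: bf_insert_def open_loads_def filter_filter_mset)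
next
  case False
  define m where "m = Max (fitting_loads M x)"
  have "open_loads a (M - {#m#}) = open_loads a (open_loads a M - {#m#})"
    by (simp add: open_loads_def filter_filter_mset)
  then show ?thesis
    using False fitting_loads_open_loads[OF assms, of M]
    by (simp add: bf_insert_def m_def[symmetric]) (simp add: open_loads_def)
qed

definition item_dist :: "real pmf" where
  "item_dist = map_pmf (\<lambda>b. if b then 3/10 else 1/4) (bernoulli_pmf (2/5))"

lemma set_pmf_item_dist: "set_pmf item_dist = {1/4, 3/10}"
  by (auto simp: item_dist_def)

lemma finite_set_pmf_item_dist: "finite (set_pmf item_dist)"
  by (simp add: set_pmf_item_dist)

lemma expectation_item_dist:
  "measure_pmf.expectation item_dist (g :: real \<Rightarrow> real) = 3/5 * g (1/4) + 2/5 * g (3/10)"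
  by (simp add: item_dist_def)

definition open_configs :: "real multiset set" where
  "open_configs = {{#}, {#1/4#}, {#3/10#}, {#1/2#}, {#11/20#}, {#3/5#}, {#3/4#},
                   {#3/10, 3/4#}, {#3/5, 3/4#}}"

text \<open>The nine open configurations have pairwise distinct total loads, so the potential is
tabulated by total open load. Its values solve the Poisson equation of the Best Fit chain on
these configurations, and bf_rate is the stationary rate at which that chain opens new bins.\<close>

definition bf_rate :: real where
  "bf_rate = 1775/5676"

definition load_potential :: "real \<Rightarrow> real" where
  "load_potential s =
     (if s = 1/4 then -4135/5676 else if s = 3/10 then -1775/2838
      else if s = 1/2 then -125/258 else if s = 11/20 then -1775/5676
      else if s = 3/5 then -1775/5676 else if s = 3/4 then -1625/5676
      else if s = 21/20 then -1767/1892 else if s = 27/20 then -1745/2838 else 0)"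

definition bins_plus_potential :: "real multiset \<Rightarrow> real" where
  "bins_plus_potential M = real (size M) + load_potential (sum_mset (open_loads (1/4) M))"

lemma load_potential_nonpos: "load_potential s \<le> 0"
  by (simp add: load_potential_def)

lemma fitting_loads_add_mset:
  "fitting_loads (add_mset l M) x = (if l + x \<le> 1 then insert l (fitting_loads M x) else fitting_loads M x)"
  by (auto simp: fitting_loads_def)

lemma fitting_loads_empty: "fitting_loads {#} x = {}"
  by (simp add: fitting_loads_def)

lemma open_configs_drift:
  assumes "C \<in> open_configs"
  shows "open_loads (1/4) (bf_insert C (1/4)) \<in> open_configs \<and>
    open_loads (1/4) (bf_insert C (3/10)) \<in> open_configs \<and>
    3/5 * (of_bool (fitting_loads C (1/4) = {})
                + load_potential (sum_mset (open_loads (1/4) (bf_insert C (1/4)))))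
       + 2/5 * (of_bool (fitting_loads C (3/10) = {})
                + load_potential (sum_mset (open_loads (1/4) (bf_insert C (3/10)))))
       = load_potential (sum_mset C) + bf_rate"
  using assms unfolding open_configs_def
  by (elim insertE emptyE)
     (simp_all add: bf_insert_def fitting_loads_add_mset fitting_loads_empty open_loads_def
                    load_potential_def bf_rate_def open_configs_def)

lemma expectation_bins_plus_potential_step:
  assumes "open_loads (1/4) M \<in> open_configs"
  shows "measure_pmf.expectation item_dist (\<lambda>x. bins_plus_potential (bf_insert M x)) = bins_plus_potential M + bf_rate"
proof -
  let ?C = "open_loads (1/4) M"
  have step: "bins_plus_potential (bf_insert M x) = real (size M) + of_bool (fitting_loads ?C x = {})
                + load_potential (sum_mset (open_loads (1/4) (bf_insert ?C x)))"
    if "x \<ge> 1/4" for x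
    using that by (simp add: bins_plus_potential_def size_bf_insert fitting_loads_open_loads
                             open_loads_bf_insert[of "1/4" x M])
  have "measure_pmf.expectation item_dist (\<lambda>x. bins_plus_potential (bf_insert M x))
          = 3/5 * bins_plus_potential (bf_insert M (1/4)) + 2/5 * bins_plus_potential (bf_insert M (3/10))"
    by (rule expectation_item_dist)
  also have "\<dots> = bins_plus_potential M + bf_rate"
    using open_configs_drift[OF assms] step[of "1/4"] step[of "3/10"]
    by (simp add: bins_plus_potential_def algebra_simps)
  finally show ?thesis .
qed

lemma expectation_BF_ge:
  "bf_rate * n \<le> measure_pmf.expectation (replicate_pmf n item_dist) (\<lambda>I. real (BF I))"
proof -
  let ?S = "{M. open_loads (1/4) M \<in> open_configs}"
  have closed: "bf_insert M x \<in> ?S" if "M \<in> ?S" and "x \<in> set_pmf item_dist" for M x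
  proof -
    have "bf_insert M (1/4) \<in> ?S" and "bf_insert M (3/10) \<in> ?S"
      using open_configs_drift[OF that(1)[simplified]] open_loads_bf_insert[of "1/4" _ M] by simp_all
    then show ?thesis
      using that(2) unfolding set_pmf_item_dist by blast
  qed
  have "{#} \<in> ?S"
    by (simp add: open_loads_def open_configs_def)
  then have "bf_rate * n = measure_pmf.expectation (replicate_pmf n item_dist)
                             (\<lambda>I. bins_plus_potential (fold (\<lambda>x M. bf_insert M x) I {#}))"
    using expectation_fold_drift[OF finite_set_pmf_item_dist closed expectation_bins_plus_potential_step]
    by (simp add: bins_plus_potential_def open_loads_def load_potential_def)
  also have "\<dots> \<le> measure_pmf.expectation (replicate_pmf n item_dist) (\<lambda>I. real (BF I))"
    by (intro integral_mono integrable_measure_pmf_finite finite_set_pmf_replicate_pmf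
              finite_set_pmf_item_dist)
       (simp add: BF_eq_size_fold bins_plus_potential_def load_potential_nonpos)
  finally show ?thesis .
qed

lemma expectation_OPT_le:
  "measure_pmf.expectation (replicate_pmf n item_dist) (\<lambda>I. real (OPT I)) \<le> 17/60 * n + 2"
proof -
  let ?w = "\<lambda>x::real. if x = 1/4 then 1/4 else 1/3 :: real"
  have "real (OPT I) \<le> (\<Sum>x\<leftarrow>I. ?w x) + 2" if "I \<in> set_pmf (replicate_pmf n item_dist)" for I
    using that by (intro OPT_le_two_sizes) (auto simp: set_replicate_pmf set_pmf_item_dist)
  then have "measure_pmf.expectation (replicate_pmf n item_dist) (\<lambda>I. real (OPT I))
          \<le> measure_pmf.expectation (replicate_pmf n item_dist) (\<lambda>I. (\<Sum>x\<leftarrow>I. ?w x) + 2)"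
    by (intro integral_mono_AE integrable_measure_pmf_finite finite_set_pmf_replicate_pmf
              finite_set_pmf_item_dist)
       (simp add: AE_measure_pmf_iff)
  also have "\<dots> = 17/60 * n + 2"
    by (simp add: integrable_measure_pmf_finite finite_set_pmf_replicate_pmf finite_set_pmf_item_dist
                  measure_pmf.prob_space expectation_sum_list_replicate_pmf expectation_item_dist)
  finally show ?thesis .
qed

lemma expectation_OPT_ge:
  assumes "n > 0"
  shows "1 \<le> measure_pmf.expectation (replicate_pmf n item_dist) (\<lambda>I. real (OPT I))"
proof -
  have "OPT I > 0" if "I \<in> set_pmf (replicate_pmf n item_dist)" for I
  proof (rule OPT_pos)
    show "is_packing I ((length I + 1 - 1) div 1) (\<lambda>i. i div 1)"
      using that by (intro is_packing_small_items) (auto simp: set_replicate_pmf set_pmf_item_dist)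
    show "I \<noteq> []"
      using that assms by (auto simp: set_replicate_pmf)
  qed
  then have "measure_pmf.expectation (replicate_pmf n item_dist) (\<lambda>I. 1)
               \<le> measure_pmf.expectation (replicate_pmf n item_dist) (\<lambda>I. real (OPT I))"
    by (intro integral_mono_AE integrable_measure_pmf_finite finite_set_pmf_replicate_pmf
              finite_set_pmf_item_dist)
       (auto simp: AE_measure_pmf_iff Suc_le_eq)
  then show ?thesis
    by simp
qed

lemma eventually_BF_OPT_ratio_ge:
  "eventually (\<lambda>n. 1101/1000 \<le> measure_pmf.expectation (replicate_pmf n item_dist) (\<lambda>I. real (BF I))
                         / measure_pmf.expectation (replicate_pmf n item_dist) (\<lambda>I. real (OPT I)))
     sequentially"
  unfolding eventually_sequentially
proof (intro exI allI impI)
  fix n :: nat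
  assume n: "n \<ge> 3000"
  define bf where "bf = measure_pmf.expectation (replicate_pmf n item_dist) (\<lambda>I. real (BF I))"
  define opt where "opt = measure_pmf.expectation (replicate_pmf n item_dist) (\<lambda>I. real (OPT I))"
  have "1101/1000 * opt \<le> 1101/1000 * (17/60 * n + 2)"
    using expectation_OPT_le[of n] by (simp add: opt_def)
  also have "\<dots> \<le> bf_rate * n"
    using n by (simp add: bf_rate_def)
  also have "\<dots> \<le> bf"
    unfolding bf_def by (rule expectation_BF_ge)
  finally show "1101/1000 \<le> bf / opt"
    using expectation_OPT_ge[of n] n by (simp add: opt_def pos_le_divide_eq)
qed

theorem lemma15:
  shows "\<exists>F :: real pmf.
           set_pmf F \<subseteq> {0<..1} \<and>
           (AE x in measure_pmf F. x \<ge> 1/4) \<and>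
           liminf (\<lambda>n. ereal (measure_pmf.expectation (replicate_pmf n F) (\<lambda>I. real (BF I))
                             / measure_pmf.expectation (replicate_pmf n F) (\<lambda>I. real (OPT I))))
             > ereal (11/10)"
proof (intro exI conjI)
  show "set_pmf item_dist \<subseteq> {0<..1}"
    by (simp add: set_pmf_item_dist)
  show "AE x in measure_pmf item_dist. x \<ge> 1/4"
    by (simp add: AE_measure_pmf_iff set_pmf_item_dist)
  have "ereal (1101/1000) \<le> liminf (\<lambda>n. ereal (measure_pmf.expectation (replicate_pmf n item_dist) (\<lambda>I. real (BF I))
                             / measure_pmf.expectation (replicate_pmf n item_dist) (\<lambda>I. real (OPT I))))"
    using eventually_BF_OPT_ratio_ge by (intro Liminf_bounded) simp
  then show "liminf (\<lambda>n. ereal (measure_pmf.expectation (replicate_pmf n item_dist) (\<lambda>I. real (BF I))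
                             / measure_pmf.expectation (replicate_pmf n item_dist) (\<lambda>I. real (OPT I))))
             > ereal (11/10)"
    by (rule less_le_trans[rotated]) simp
qed

end
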